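(* Let $1\le m\le D$. For each $\mathbf a\in\{0,1\}^N$ define the function $f_{\mathbf a}:\Sigma_m\to\mathbb R$ by $$f_{\mathbf a}(S)=\frac{n_S(Z_{\mathbf a}=+1)-n_S(Z_{\mathbf a}=-1)}{m},$$ where $n_S(Z_{\mathbf a}=\pm1)$ is the number of $\mathbf z\in S$ with $(-1)^{\mathbf a\cdot\mathbf z}=\pm1$. Then $f_{\mathbf a}$ is an eigenfunction of the transition matrix of the local automaton Markov chain on $\Sigma_m$ with eigenvalue $1-\frac{|\mathbf a|}{2N}$, i.e. $$\frac{1}{|\mathcal G|}\sum_{u\in\mathcal G}f_{\mathbf a}(u(S))=\Big(1-\frac{|\mathbf a|}{2N}\Big)f_{\mathbf a}(S)\quad\text{for all }S\in\Sigma_m,$$ where $|\mathbf a|$ is the Hamming weight of $\mathbf a$.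
   Context: Consider $N\ge3$ qubits on a ring (site indices modulo $N$), bitstrings $\mathbf z\in\{0,1\}^N$, $D=2^N$, and $\mathbf a\cdot\mathbf z=\sum_i a_iz_i$. The gate set is $\mathcal G=\{u_{iab}: i\in\{1,\dots,N\},\ a,b\in\{0,1\}\}$ ($|\mathcal G|=4N$), where $u_{iab}$ is the permutation of $\{0,1\}^N$ that flips bit $i$ if and only if bit $i-1$ equals $a$ and bit $i+1$ equals $b$. $\Sigma_m$ is the set of subsets of $\{0,1\}^N$ of cardinality $m$, with $u(S)=\{u(\mathbf z):\mathbf z\in S\}$; the induced Markov chain has transition matrix $\Gamma_{S,S'}=\frac{1}{|\mathcal G|}\sum_{u\in\mathcal G}\delta_{S',u(S)}$, and $(\Gamma f)(S)=\sum_{S'}\Gamma_{S,S'}f(S')$. *)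

theory Defs
  imports Complex_Main
begin

text \<open>Bitstrings of length N: functions nat => bool vanishing outside {..<N}
  (site i in 0..N-1 corresponds to site i+1 of the paper; indices modulo N).\<close>
definition bitstrings :: "nat \<Rightarrow> (nat \<Rightarrow> bool) set" where
  "bitstrings N = {z. \<forall>i. N \<le> i \<longrightarrow> \<not> z i}"

definition gate :: "nat \<Rightarrow> nat \<Rightarrow> bool \<Rightarrow> bool \<Rightarrow> (nat \<Rightarrow> bool) \<Rightarrow> (nat \<Rightarrow> bool)" where
  "gate N i a b z =
     (if z ((i + N - 1) mod N) = a \<and> z ((i + 1) mod N) = b then z(i := \<not> z i) else z)"

definition gate_idx :: "nat \<Rightarrow> (nat \<times> bool \<times> bool) set" where
  "gate_idx N = {..<N} \<times> (UNIV :: bool set) \<times> (UNIV :: bool set)"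

definition gate_of :: "nat \<Rightarrow> nat \<times> bool \<times> bool \<Rightarrow> (nat \<Rightarrow> bool) \<Rightarrow> (nat \<Rightarrow> bool)" where
  "gate_of N g = (case g of (i, a, b) \<Rightarrow> gate N i a b)"

definition Sigma_m :: "nat \<Rightarrow> nat \<Rightarrow> (nat \<Rightarrow> bool) set set" where
  "Sigma_m N m = {S. S \<subseteq> bitstrings N \<and> card S = m}"

definition Gamma :: "nat \<Rightarrow> (nat \<Rightarrow> bool) set \<Rightarrow> (nat \<Rightarrow> bool) set \<Rightarrow> real" where
  "Gamma N S S' = (1 / real (card (gate_idx N))) *
      (\<Sum>g\<in>gate_idx N. if S' = gate_of N g ` S then 1 else 0)"

definition Gamma_op :: "nat \<Rightarrow> nat \<Rightarrow> ((nat \<Rightarrow> bool) set \<Rightarrow> real) \<Rightarrow> (nat \<Rightarrow> bool) set \<Rightarrow> real" where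
  "Gamma_op N m f S = (\<Sum>S'\<in>Sigma_m N m. Gamma N S S' * f S')"

definition dotp :: "nat \<Rightarrow> (nat \<Rightarrow> bool) \<Rightarrow> (nat \<Rightarrow> bool) \<Rightarrow> nat" where
  "dotp N a z = card {i\<in>{..<N}. a i \<and> z i}"

definition hamming_weight :: "nat \<Rightarrow> (nat \<Rightarrow> bool) \<Rightarrow> nat" where
  "hamming_weight N a = card {i\<in>{..<N}. a i}"

definition f_a :: "nat \<Rightarrow> nat \<Rightarrow> (nat \<Rightarrow> bool) \<Rightarrow> (nat \<Rightarrow> bool) set \<Rightarrow> real" where
  "f_a N m a S = (real (card {z\<in>S. even (dotp N a z)}) - real (card {z\<in>S. odd (dotp N a z)})) / real m"

end

theory Submission
  imports Defs
begin

text \<open>Write \<open>\<chi>\<^sub>a(z) = (-1)^(a\<cdot>z)\<close>, so that \<open>m f\<^sub>a(S)\<close> is the sum of \<open>\<chi>\<^sub>a\<close> over \<open>S\<close>.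
  Each gate is an involution, hence maps \<open>S\<close> bijectively onto \<open>u(S) \<in> \<Sigma>\<^sub>m\<close>, and the chain
  averages \<open>f\<^sub>a(u(S))\<close> over the gates. For a fixed \<open>z\<close>, exactly one of the four gates at
  site \<open>i\<close> flips bit \<open>i\<close> (the one whose control pattern matches the neighbours of \<open>z\<close>),
  and that flip changes the sign of \<open>\<chi>\<^sub>a(z)\<close> iff \<open>a\<^sub>i = 1\<close>. So the four gates at site \<open>i\<close>
  contribute \<open>4\<chi>\<^sub>a(z)\<close> or \<open>2\<chi>\<^sub>a(z)\<close>, in total \<open>(4N - 2|a|)\<chi>\<^sub>a(z)\<close> over all \<open>4N\<close> gates.\<close>

definition character :: "nat \<Rightarrow> (nat \<Rightarrow> bool) \<Rightarrow> (nat \<Rightarrow> bool) \<Rightarrow> real" where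
  "character N a z = (-1) ^ dotp N a z"

lemma finite_bitstrings: "finite (bitstrings N)"
proof -
  have "bitstrings N \<subseteq> (\<lambda>A i. i \<in> A) ` Pow {..<N}"
  proof
    fix z assume "z \<in> bitstrings N"
    then have "{i. z i} \<in> Pow {..<N}" and "z = (\<lambda>i. i \<in> {i. z i})"
      unfolding bitstrings_def using not_le by auto
    then show "z \<in> (\<lambda>A i. i \<in> A) ` Pow {..<N}" by blast
  qed
  then show ?thesis by (rule finite_subset) simp
qed

lemma finite_Sigma_m: "finite (Sigma_m N m)"
  using finite_bitstrings unfolding Sigma_m_def by (simp add: finite_subset)

lemma f_a_eq_sum_character:
  assumes "finite T"
  shows "f_a N m a T = (\<Sum>z\<in>T. character N a z) / real m"
  using assms unfolding f_a_def character_def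
  by (simp add: minus_one_power_iff sum.If_cases Int_def conj_commute)

lemma dotp_set_bit:
  assumes "i < N"
  shows "dotp N a (z(i := True)) = dotp N a (z(i := False)) + (if a i then 1 else 0)"
proof -
  define B where "B = {j\<in>{..<N}. a j \<and> (z(i := False)) j}"
  have "{j\<in>{..<N}. a j \<and> (z(i := True)) j} = (if a i then insert i B else B)"
    using assms unfolding B_def by auto
  moreover have "finite B" "i \<notin> B" unfolding B_def by auto
  ultimately show ?thesis unfolding dotp_def B_def[symmetric] by simp
qed

lemma character_set_bit:
  assumes "i < N"
  shows "character N a (z(i := True)) = (if a i then - 1 else 1) * character N a (z(i := False))"
  unfolding character_def dotp_set_bit[OF assms] by simp

lemma character_flip_bit:
  assumes "i < N"
  shows "character N a (z(i := \<not> z i)) = (if a i then - character N a z else character N a z)"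
proof (cases "z i")
  case True
  then have "z(i := True) = z" "z(i := \<not> z i) = z(i := False)" by (simp_all add: fun_upd_idem)
  then show ?thesis using character_set_bit[OF assms, of a z] by auto
next
  case False
  then have "z(i := False) = z" "z(i := \<not> z i) = z(i := True)" by (simp_all add: fun_upd_idem)
  then show ?thesis using character_set_bit[OF assms, of a z] by auto
qed

lemma sum_character_gates_at_site:
  assumes "i < N"
  shows "(\<Sum>(b, c)\<in>UNIV. character N a (gate N i b c z))
         = (if a i then 2 else 4) * character N a z"
proof -
  have UNIV_bool_pairs: "(UNIV :: (bool \<times> bool) set) = {(True, True), (True, False), (False, True), (False, False)}"
    by auto
  let ?l = "z ((i + N - 1) mod N)" and ?r = "z ((i + 1) mod N)"
  show ?thesis
    unfolding UNIV_bool_pairs gate_def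
    by (cases ?l; cases ?r) (simp_all add: character_flip_bit[OF assms])
qed

lemma card_gate_idx: "card (gate_idx N) = 4 * N"
  unfolding gate_idx_def by (simp only: card_cartesian_product card_UNIV_bool card_lessThan)

lemma sum_character_gates:
  "(\<Sum>g\<in>gate_idx N. character N a (gate_of N g z))
     = (4 * real N - 2 * real (hamming_weight N a)) * character N a z"
proof -
  have "(\<Sum>g\<in>gate_idx N. character N a (gate_of N g z))
      = (\<Sum>i<N. \<Sum>(b, c)\<in>UNIV. character N a (gate N i b c z))"
    unfolding gate_idx_def gate_of_def UNIV_Times_UNIV by (simp add: sum.cartesian_product split_def)
  also have "\<dots> = (\<Sum>i<N. (if a i then 2 else 4) * character N a z)"
    by (simp add: sum_character_gates_at_site)
  also have "\<dots> = (\<Sum>i<N. 4 - (if a i then 2 else 0)) * character N a z"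
    unfolding sum_distrib_right by (rule sum.cong) auto
  also have "(\<Sum>i<N. 4 - (if a i then 2 else 0 :: real)) = 4 * real N - 2 * real (hamming_weight N a)"
    unfolding hamming_weight_def by (simp add: sum_subtractf sum.If_cases Int_def conj_commute)
  finally show ?thesis .
qed

lemma ring_neighbours_ne:
  assumes "2 \<le> (N :: nat)" "i < N"
  shows "(i + N - 1) mod N \<noteq> i" and "(i + 1) mod N \<noteq> i"
proof -
  show "(i + N - 1) mod N \<noteq> i"
  proof (cases i)
    case 0
    then show ?thesis using assms by simp
  next
    case (Suc k)
    then have "(i + N - 1) mod N = k" using assms by simp
    then show ?thesis using Suc by simp
  qed
  show "(i + 1) mod N \<noteq> i"
    using assms by (cases "i + 1 = N") simp_all
qed

lemma gate_involution:
  assumes "2 \<le> N" "i < N"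
  shows "gate N i b c (gate N i b c z) = z"
  using ring_neighbours_ne[OF assms] unfolding gate_def by auto

lemma gate_of_involution:
  assumes "2 \<le> N" "g \<in> gate_idx N"
  shows "gate_of N g (gate_of N g z) = z"
  using assms gate_involution unfolding gate_idx_def gate_of_def by auto

lemma gate_of_in_bitstrings:
  assumes "z \<in> bitstrings N" "g \<in> gate_idx N"
  shows "gate_of N g z \<in> bitstrings N"
  using assms unfolding gate_idx_def gate_of_def gate_def bitstrings_def by (auto split: if_splits)

lemma inj_on_gate_of:
  assumes "2 \<le> N" "g \<in> gate_idx N"
  shows "inj_on (gate_of N g) S"
  by (rule inj_on_inverseI[where g = "gate_of N g"]) (rule gate_of_involution[OF assms])

lemma image_gate_of_in_Sigma_m:
  assumes "2 \<le> N" "g \<in> gate_idx N" "S \<in> Sigma_m N m"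
  shows "gate_of N g ` S \<in> Sigma_m N m"
proof -
  have "gate_of N g ` S \<subseteq> bitstrings N"
    using assms(2,3) gate_of_in_bitstrings unfolding Sigma_m_def by blast
  moreover have "card (gate_of N g ` S) = m"
    using assms(3) card_image[OF inj_on_gate_of[OF assms(1,2)]] unfolding Sigma_m_def by simp
  ultimately show ?thesis unfolding Sigma_m_def by simp
qed

lemma Gamma_op_eq_gate_average:
  assumes "\<And>g. g \<in> gate_idx N \<Longrightarrow> gate_of N g ` S \<in> Sigma_m N m"
  shows "Gamma_op N m f S = (\<Sum>g\<in>gate_idx N. f (gate_of N g ` S)) / real (card (gate_idx N))"
proof -
  have "Gamma_op N m f S
      = (\<Sum>g\<in>gate_idx N. \<Sum>S'\<in>Sigma_m N m. if S' = gate_of N g ` S then f S' else 0)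
          / real (card (gate_idx N))"
    unfolding Gamma_op_def Gamma_def
    by (subst sum.swap) (auto intro!: sum.cong simp: sum_distrib_right sum_divide_distrib)
  also have "\<dots> = (\<Sum>g\<in>gate_idx N. f (gate_of N g ` S)) / real (card (gate_idx N))"
    using assms finite_Sigma_m by (simp add: sum.delta')
  finally show ?thesis .
qed

lemma sum_f_a_gate_images:
  assumes "2 \<le> N" "S \<subseteq> bitstrings N"
  shows "(\<Sum>g\<in>gate_idx N. f_a N m a (gate_of N g ` S))
         = (4 * real N - 2 * real (hamming_weight N a)) * f_a N m a S"
proof -
  have "finite S" using assms(2) finite_bitstrings finite_subset by blast
  then have "(\<Sum>g\<in>gate_idx N. f_a N m a (gate_of N g ` S))
      = (\<Sum>g\<in>gate_idx N. \<Sum>z\<in>S. character N a (gate_of N g z)) / real m"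
    using inj_on_gate_of[OF assms(1)]
    by (simp add: f_a_eq_sum_character sum.reindex sum_divide_distrib)
  also have "\<dots> = (\<Sum>z\<in>S. (4 * real N - 2 * real (hamming_weight N a)) * character N a z) / real m"
    by (subst sum.swap) (simp add: sum_character_gates)
  also have "\<dots> = (4 * real N - 2 * real (hamming_weight N a)) * f_a N m a S"
    using \<open>finite S\<close> by (simp add: f_a_eq_sum_character sum_distrib_left)
  finally show ?thesis .
qed

theorem mainTheorem13:
  fixes N m :: nat and a :: "nat \<Rightarrow> bool" and S :: "(nat \<Rightarrow> bool) set"
  assumes "N \<ge> 3" and "1 \<le> m" and "m \<le> 2 ^ N"
    and "a \<in> bitstrings N"
    and "S \<in> Sigma_m N m"
  shows "Gamma_op N m (f_a N m a) S
         = (1 - real (hamming_weight N a) / (2 * real N)) * f_a N m a S"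
proof -
  have "2 \<le> N" using assms(1) by simp
  have "S \<subseteq> bitstrings N" using assms(5) unfolding Sigma_m_def by simp
  have "Gamma_op N m (f_a N m a) S = (\<Sum>g\<in>gate_idx N. f_a N m a (gate_of N g ` S)) / real (4 * N)"
    using Gamma_op_eq_gate_average image_gate_of_in_Sigma_m[OF \<open>2 \<le> N\<close> _ assms(5)]
    by (simp add: card_gate_idx)
  also have "\<dots> = (4 * real N - 2 * real (hamming_weight N a)) * f_a N m a S / (4 * real N)"
    by (simp add: sum_f_a_gate_images[OF \<open>2 \<le> N\<close> \<open>S \<subseteq> bitstrings N\<close>])
  also have "\<dots> = (1 - real (hamming_weight N a) / (2 * real N)) * f_a N m a S"
    using \<open>2 \<le> N\<close> by (simp add: field_simps)
  finally show ?thesis .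
qed

end
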